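(* For all $f,f_1\in\mathcal B(\mathcal X)$, $$e^{-\|f-f_0\|_\infty}e^{-\|f\|_\infty}\Lambda q_1\|f_1-P_X(f_1)\|_{L_2}^2\le D^2\ell_\star(f)(f_1,f_1)\le e^{\|f-f_0\|_\infty}e^{\|f\|_\infty}\Lambda\|f_1\|_{L_2}^2,$$ where $D^2\ell_\star(f)(f_1,f_1)=\frac{d^2}{d\epsilon^2}\ell_\star(f+\epsilon f_1)\big|_{\epsilon=0}$ (which exists).
   Context: Survival setup. Let $\mathcal X$ be a locally compact metric space in which every open set is $\sigma$-compact, with its Borel $\sigma$-algebra; $\mathcal B(\mathcal X)$ denotes the bounded measurable functions $\mathcal X\to\mathbb R$ and $\|f\|_\infty=\sup_{x}|f(x)|$. Let $(X,T_S,T_C)$ be a random vector in $\mathcal X\times(0,\infty)\times(0,\infty)$ with $T_S,T_C$ conditionally independent given $X$. Write $P_X$ for the law of $X$; $P_X(f)=\int f\,dP_X$; $\|\cdot\|_{L_2}$ refers to $L_2(P_X)$. Set $T=T_S\wedge T_C$, $q(x,t)=\mathbb P(T\ge t\mid X=x)$, and assume $q_1:=\inf_{x\in\mathcal X}q(x,1)>0$. Assume $-\frac{d}{dt}\log\mathbb P(T_S>t\mid X=x)=\lambda_0(t)e^{f_0(x)}$ for $t\in[0,1]$ and $P_X$-a.e. $x$, where $\lambda_0:[0,1]\to[0,\infty)$ is measurable and $f_0\in\mathcal B(\mathcal X)$ with $P_X(f_0)=0$; let $\Lambda=\int_0^1\lambda_0(t)\,dt$ (which is finite). For $f\in\mathcal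 B(\mathcal X)$ define $S(f,t)=\int_{\mathcal X}q(x,t)e^{f(x)}dP_X(x)$ and the limiting negative log-partial likelihood $\ell_\star(f)=\int_0^1\log S(f,t)\,S(f_0,t)\lambda_0(t)\,dt-\int_0^1\int_{\mathcal X}q(x,t)e^{f_0(x)}f(x)\,dP_X(x)\,\lambda_0(t)\,dt$. *)

theory Defs
  imports "HOL-Probability.Probability"
begin

text \<open>Sup norm over the whole space (not an essential sup).\<close>
definition supnorm :: "('a \<Rightarrow> real) \<Rightarrow> real" where
  "supnorm f = (SUP x. \<bar>f x\<bar>)"

definition bdd_meas :: "('a::topological_space \<Rightarrow> real) set" where
  "bdd_meas = {f. f \<in> borel_measurable borel \<and> bounded (range f)}"

definition open_sigma_compact :: "'a::topological_space itself \<Rightarrow> bool" where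
  "open_sigma_compact _ = (\<forall>U::'a set. open U \<longrightarrow>
      (\<exists>F. countable F \<and> (\<forall>K\<in>F. compact K) \<and> \<Union>F = U))"

text \<open>At-risk function q(x,t) = P(T \<ge> t | X = x), with T = min T_S T_C and
  T_S, T_C conditionally independent given X with conditional laws KS x, KC x.\<close>
definition atrisk :: "('a \<Rightarrow> real measure) \<Rightarrow> ('a \<Rightarrow> real measure) \<Rightarrow> 'a \<Rightarrow> real \<Rightarrow> real" where
  "atrisk KS KC x t = measure (KS x) {t..} * measure (KC x) {t..}"

definition L2norm :: "'a measure \<Rightarrow> ('a \<Rightarrow> real) \<Rightarrow> real" where
  "L2norm P g = sqrt (\<integral>x. (g x)\<^sup>2 \<partial>P)"

definition Sfun :: "'a measure \<Rightarrow> ('a \<Rightarrow> real \<Rightarrow> real) \<Rightarrow> ('a \<Rightarrow> real) \<Rightarrow> real \<Rightarrow> real" where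
  "Sfun P q f t = (\<integral>x. q x t * exp (f x) \<partial>P)"

definition ell_star :: "'a measure \<Rightarrow> ('a \<Rightarrow> real \<Rightarrow> real) \<Rightarrow> (real \<Rightarrow> real)
    \<Rightarrow> ('a \<Rightarrow> real) \<Rightarrow> ('a \<Rightarrow> real) \<Rightarrow> real" where
  "ell_star P q lam f0 f =
     (LINT t:{0..1}|lborel. ln (Sfun P q f t) * Sfun P q f0 t * lam t)
   - (LINT t:{0..1}|lborel. (\<integral>x. q x t * exp (f0 x) * f x \<partial>P) * lam t)"

end

theory Submission
  imports Defs
begin

text \<open>Along the line f + e f1 put S_k(e,t) = int q(x,t) exp(f + e f1) f1^k dP_X, so that
  d/de S_k = S_(k+1). Since q >= q1 > 0 on [0,1], S_0 stays away from 0 uniformly for e in a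
  neighbourhood, and differentiating l_star twice under both integrals gives
  D = int_0^1 (S_2/S_0 - (S_1/S_0)^2)(0,t) S(f0,t) lam(t) dt.
  The bracket is the variance of f1 under the probability measure proportional to q exp(f) dP_X.
  As q1 exp(-||f||) <= q exp(f) <= exp(||f||) on [0,1] and a variance is the least mean square
  deviation from a constant, the bracket times S_0 lies between q1 exp(-||f||) Var(f1) and
  exp(||f||) P_X(f1^2), while S(f0,t) / S_0(0,t) lies between exp(-||f - f0||) and exp(||f - f0||).
  Integrating against lam produces the factor Lambda.\<close>

lemma has_real_derivative_of_quadratic_remainder:
  fixes \<phi> :: "real \<Rightarrow> real"
  assumes "r > 0"
    and remainder: "\<And>e. \<bar>e - e0\<bar> \<le> r \<Longrightarrow> \<bar>\<phi> e - \<phi> e0 - (e - e0) * D\<bar> \<le> C * (e - e0)\<^sup>2"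
  shows "(\<phi> has_real_derivative D) (at e0)"
proof -
  have "((\<lambda>e. (\<phi> e - \<phi> e0) / (e - e0) - D) \<longlongrightarrow> 0) (at e0)"
  proof (rule Lim_null_comparison)
    show "\<forall>\<^sub>F e in at e0. norm ((\<phi> e - \<phi> e0) / (e - e0) - D) \<le> C * \<bar>e - e0\<bar>"
      unfolding eventually_at
    proof (intro exI[of _ r] conjI ballI impI)
      fix e assume e: "e \<noteq> e0 \<and> dist e e0 < r"
      then have "norm ((\<phi> e - \<phi> e0) / (e - e0) - D) = \<bar>\<phi> e - \<phi> e0 - (e - e0) * D\<bar> / \<bar>e - e0\<bar>"
        by (simp add: field_simps abs_divide)
      also have "\<dots> \<le> C * (e - e0)\<^sup>2 / \<bar>e - e0\<bar>"
        using remainder[of e] e by (intro divide_right_mono) (auto simp: dist_real_def)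
      also have "\<dots> = C * \<bar>e - e0\<bar>"
        using e by (cases "e - e0 > 0") (auto simp: power2_eq_square field_simps)
      finally show "norm ((\<phi> e - \<phi> e0) / (e - e0) - D) \<le> C * \<bar>e - e0\<bar>" .
    qed (use \<open>r > 0\<close> in simp)
    have "((\<lambda>e. C * \<bar>e - e0\<bar>) \<longlongrightarrow> C * \<bar>e0 - e0\<bar>) (at e0)"
      by (intro tendsto_intros)
    then show "((\<lambda>e. C * \<bar>e - e0\<bar>) \<longlongrightarrow> 0) (at e0)"
      by simp
  qed
  then show ?thesis
    by (simp add: has_field_derivative_iff LIM_zero_iff)
qed

lemma abs_taylor_remainder_le:
  fixes h h' h'' :: "real \<Rightarrow> real"
  assumes h': "\<And>s. s \<in> closed_segment a b \<Longrightarrow> (h has_real_derivative h' s) (at s)"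
    and h'': "\<And>s. s \<in> closed_segment a b \<Longrightarrow> (h' has_real_derivative h'' s) (at s)"
    and bound: "\<And>s. s \<in> closed_segment a b \<Longrightarrow> \<bar>h'' s\<bar> \<le> L"
  shows "\<bar>h b - h a - (b - a) * h' a\<bar> \<le> L * (b - a)\<^sup>2"
proof -
  have "0 \<le> L" using bound[of a] by auto
  have h'_near: "\<bar>h' s - h' a\<bar> \<le> L * \<bar>b - a\<bar>" if s: "s \<in> closed_segment a b" for s
  proof -
    have "norm (h' s - h' a) \<le> L * norm (s - a)"
      by (rule field_differentiable_bound[OF convex_closed_segment])
        (use s h'' bound in \<open>auto intro: has_field_derivative_at_within\<close>)
    then have "\<bar>h' s - h' a\<bar> \<le> L * \<bar>s - a\<bar>" by simp
    also have "\<dots> \<le> L * \<bar>b - a\<bar>"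
      using segment_bound(1)[OF s] \<open>0 \<le> L\<close> by (intro mult_left_mono) auto
    finally show ?thesis .
  qed
  have "norm (h b - h a - (b - a) *\<^sub>R h' a) \<le> norm (b - a) * (L * \<bar>b - a\<bar>)"
    by (rule vector_differentiable_bound_linearization[where S="closed_segment a b"])
      (use h' h'_near in \<open>auto simp: has_real_derivative_iff_has_vector_derivative[symmetric]
        intro: has_field_derivative_at_within\<close>)
  moreover have "\<bar>b - a\<bar> * (L * \<bar>b - a\<bar>) = L * (b - a)\<^sup>2"
    by (cases "b - a > 0") (auto simp: power2_eq_square algebra_simps)
  ultimately show ?thesis
    by simp
qed

lemma has_real_derivative_integral:
  fixes h h' h'' :: "real \<Rightarrow> 'a \<Rightarrow> real"
  assumes "r > 0"
    and h': "\<And>x e. x \<in> space M \<Longrightarrow> \<bar>e - e0\<bar> \<le> r \<Longrightarrow>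
      ((\<lambda>e. h e x) has_real_derivative h' e x) (at e)"
    and h'': "\<And>x e. x \<in> space M \<Longrightarrow> \<bar>e - e0\<bar> \<le> r \<Longrightarrow>
      ((\<lambda>e. h' e x) has_real_derivative h'' e x) (at e)"
    and dominated: "\<And>x e. x \<in> space M \<Longrightarrow> \<bar>e - e0\<bar> \<le> r \<Longrightarrow> \<bar>h'' e x\<bar> \<le> L x"
    and "integrable M L"
    and h_integrable: "\<And>e. \<bar>e - e0\<bar> \<le> r \<Longrightarrow> integrable M (h e)"
    and "integrable M (h' e0)"
  shows "((\<lambda>e. \<integral>x. h e x \<partial>M) has_real_derivative (\<integral>x. h' e0 x \<partial>M)) (at e0)"
proof (rule has_real_derivative_of_quadratic_remainder[OF \<open>r > 0\<close>])
  fix e assume e: "\<bar>e - e0\<bar> \<le> r"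
  have near: "\<bar>s - e0\<bar> \<le> r" if "s \<in> closed_segment e0 e" for s
    using segment_bound(1)[OF that] e by simp
  have remainder: "\<bar>h e x - h e0 x - (e - e0) * h' e0 x\<bar> \<le> L x * (e - e0)\<^sup>2" if "x \<in> space M" for x
    by (rule abs_taylor_remainder_le[where h="\<lambda>e. h e x" and h'="\<lambda>e. h' e x" and h''="\<lambda>e. h'' e x"])
      (use near that h' h'' dominated in auto)
  have "integrable M (h e)" "integrable M (h e0)"
    using h_integrable e \<open>r > 0\<close> by auto
  then have "\<bar>(\<integral>x. h e x \<partial>M) - (\<integral>x. h e0 x \<partial>M) - (e - e0) * (\<integral>x. h' e0 x \<partial>M)\<bar>
      = \<bar>\<integral>x. h e x - h e0 x - (e - e0) * h' e0 x \<partial>M\<bar>"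
    using \<open>integrable M (h' e0)\<close> by simp
  also have "\<dots> \<le> (\<integral>x. \<bar>h e x - h e0 x - (e - e0) * h' e0 x\<bar> \<partial>M)"
    by (rule integral_abs_bound)
  also have "\<dots> \<le> (\<integral>x. L x * (e - e0)\<^sup>2 \<partial>M)"
    using \<open>integrable M (h e)\<close> \<open>integrable M (h e0)\<close> \<open>integrable M (h' e0)\<close>
      \<open>integrable M L\<close> remainder
    by (intro integral_mono) auto
  finally show "\<bar>(\<integral>x. h e x \<partial>M) - (\<integral>x. h e0 x \<partial>M) - (e - e0) * (\<integral>x. h' e0 x \<partial>M)\<bar>
      \<le> (\<integral>x. L x \<partial>M) * (e - e0)\<^sup>2"
    by simp
qed

lemma set_integrable_bounded_mult:
  fixes g w :: "'a \<Rightarrow> real"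
  assumes w: "set_integrable M A w" and g: "g \<in> borel_measurable M"
    and bound: "\<And>x. x \<in> A \<Longrightarrow> \<bar>g x\<bar> \<le> C"
  shows "set_integrable M A (\<lambda>x. g x * w x)"
proof (rule set_integrable_bound)
  show "set_integrable M A (\<lambda>x. C * w x)"
    using w by simp
  have "(\<lambda>x. indicator A x * w x) \<in> borel_measurable M"
    using w unfolding set_integrable_def by auto
  then show "set_borel_measurable M A (\<lambda>x. g x * w x)"
    using g unfolding set_borel_measurable_def by (simp add: mult.left_commute)
  have "\<bar>g x\<bar> * \<bar>w x\<bar> \<le> \<bar>C\<bar> * \<bar>w x\<bar>" if "x \<in> A" for x
    using bound[OF that] by (intro mult_right_mono) auto
  then show "AE x in M. x \<in> A \<longrightarrow> norm (g x * w x) \<le> norm (C * w x)"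
    by (simp add: abs_mult)
qed

lemma has_real_derivative_set_integral:
  fixes h h' h'' :: "real \<Rightarrow> 'a \<Rightarrow> real" and w :: "'a \<Rightarrow> real"
  assumes "r > 0" and w: "set_integrable M A w"
    and h': "\<And>x e. x \<in> A \<Longrightarrow> \<bar>e - e0\<bar> \<le> r \<Longrightarrow>
      ((\<lambda>e. h e x) has_real_derivative h' e x) (at e)"
    and h'': "\<And>x e. x \<in> A \<Longrightarrow> \<bar>e - e0\<bar> \<le> r \<Longrightarrow>
      ((\<lambda>e. h' e x) has_real_derivative h'' e x) (at e)"
    and h_bound: "\<And>x e. x \<in> A \<Longrightarrow> \<bar>e - e0\<bar> \<le> r \<Longrightarrow> \<bar>h e x\<bar> \<le> C"
    and h'_bound: "\<And>x. x \<in> A \<Longrightarrow> \<bar>h' e0 x\<bar> \<le> C'"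
    and h''_bound: "\<And>x e. x \<in> A \<Longrightarrow> \<bar>e - e0\<bar> \<le> r \<Longrightarrow> \<bar>h'' e x\<bar> \<le> C''"
    and h_measurable: "\<And>e. h e \<in> borel_measurable M"
    and h'_measurable: "h' e0 \<in> borel_measurable M"
  shows "((\<lambda>e. LINT x:A|M. h e x * w x) has_real_derivative (LINT x:A|M. h' e0 x * w x)) (at e0)"
  unfolding set_lebesgue_integral_def
proof (rule has_real_derivative_integral[OF \<open>r > 0\<close>,
      where h''="\<lambda>e x. indicator A x *\<^sub>R (h'' e x * w x)" and L="\<lambda>x. C'' * \<bar>indicator A x * w x\<bar>"])
  fix x e assume e: "\<bar>e - e0\<bar> \<le> r"
  show "((\<lambda>e. indicator A x *\<^sub>R (h e x * w x)) has_real_derivative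
      indicator A x *\<^sub>R (h' e x * w x)) (at e)"
    by (cases "x \<in> A") (auto intro!: derivative_eq_intros h' e)
  show "((\<lambda>e. indicator A x *\<^sub>R (h' e x * w x)) has_real_derivative
      indicator A x *\<^sub>R (h'' e x * w x)) (at e)"
    by (cases "x \<in> A") (auto intro!: derivative_eq_intros h'' e)
  show "\<bar>indicator A x *\<^sub>R (h'' e x * w x)\<bar> \<le> C'' * \<bar>indicator A x * w x\<bar>"
    by (cases "x \<in> A") (auto simp: abs_mult intro!: mult_right_mono h''_bound e)
next
  show "integrable M (\<lambda>x. C'' * \<bar>indicator A x * w x\<bar>)"
    using w unfolding set_integrable_def by auto
next
  fix e assume "\<bar>e - e0\<bar> \<le> r"
  then show "integrable M (\<lambda>x. indicator A x *\<^sub>R (h e x * w x))"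
    using set_integrable_bounded_mult[OF w h_measurable h_bound] unfolding set_integrable_def by blast
next
  show "integrable M (\<lambda>x. indicator A x *\<^sub>R (h' e0 x * w x))"
    using set_integrable_bounded_mult[OF w h'_measurable h'_bound] unfolding set_integrable_def .
qed

lemma (in prob_space) abs_integral_le_const:
  fixes g :: "'a \<Rightarrow> real"
  assumes "integrable M g" "\<And>x. x \<in> space M \<Longrightarrow> \<bar>g x\<bar> \<le> C"
  shows "\<bar>\<integral>x. g x \<partial>M\<bar> \<le> C"
proof -
  have "\<bar>\<integral>x. g x \<partial>M\<bar> \<le> (\<integral>x. \<bar>g x\<bar> \<partial>M)"
    by (rule integral_abs_bound)
  also have "\<dots> \<le> (\<integral>x. C \<partial>M)"
    using assms by (intro integral_mono) auto
  finally show ?thesis by (simp add: prob_space)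
qed

lemma (in prob_space) const_le_integral:
  fixes g :: "'a \<Rightarrow> real"
  assumes "integrable M g" "\<And>x. x \<in> space M \<Longrightarrow> C \<le> g x"
  shows "C \<le> (\<integral>x. g x \<partial>M)"
proof -
  have "(\<integral>x. C \<partial>M) \<le> (\<integral>x. g x \<partial>M)"
    using assms by (intro integral_mono) auto
  then show ?thesis by (simp add: prob_space)
qed

lemma (in prob_space) variance_le_expectation_sq_diff:
  fixes X :: "'a \<Rightarrow> real"
  assumes X: "integrable M X" and X2: "integrable M (\<lambda>x. (X x)\<^sup>2)"
  shows "variance X \<le> expectation (\<lambda>x. (X x - c)\<^sup>2)"
proof -
  have "(\<lambda>x. (X x - c)\<^sup>2) = (\<lambda>x. (X x)\<^sup>2 - 2 * c * X x + c\<^sup>2)"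
    by (simp add: power2_diff fun_eq_iff algebra_simps)
  then have "expectation (\<lambda>x. (X x - c)\<^sup>2) = expectation (\<lambda>x. (X x)\<^sup>2) - 2 * c * expectation X + c\<^sup>2"
    using X X2 by (simp add: prob_space)
  also have "\<dots> = variance X + (expectation X - c)\<^sup>2"
    using variance_eq[OF X X2] by (simp add: power2_diff)
  finally show ?thesis by simp
qed

lemma set_integral_weighted_bounds:
  fixes g w :: "'a \<Rightarrow> real"
  assumes w: "set_integrable M A w" and w_nonneg: "\<And>x. x \<in> A \<Longrightarrow> 0 \<le> w x"
    and g: "g \<in> borel_measurable M" and bounds: "\<And>x. x \<in> A \<Longrightarrow> a \<le> g x \<and> g x \<le> b"
  shows "a * (LINT x:A|M. w x) \<le> (LINT x:A|M. g x * w x)"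
    and "(LINT x:A|M. g x * w x) \<le> b * (LINT x:A|M. w x)"
proof -
  have gw: "set_integrable M A (\<lambda>x. g x * w x)"
    by (rule set_integrable_bounded_mult[OF w g, where C="\<bar>a\<bar> + \<bar>b\<bar>"]) (use bounds in force)
  have "(LINT x:A|M. a * w x) \<le> (LINT x:A|M. g x * w x)"
    using w gw bounds w_nonneg by (intro set_integral_mono mult_right_mono) auto
  then show "a * (LINT x:A|M. w x) \<le> (LINT x:A|M. g x * w x)" by simp
  have "(LINT x:A|M. g x * w x) \<le> (LINT x:A|M. b * w x)"
    using w gw bounds w_nonneg by (intro set_integral_mono mult_right_mono) auto
  then show "(LINT x:A|M. g x * w x) \<le> b * (LINT x:A|M. w x)" by simp
qed

lemma L2norm_sq: "(L2norm P g)\<^sup>2 = (\<integral>x. (g x)\<^sup>2 \<partial>P)"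
  by (simp add: L2norm_def)

lemma abs_le_supnorm:
  assumes "bounded (range g)"
  shows "\<bar>g x\<bar> \<le> supnorm g"
proof -
  obtain a where "\<And>y. \<bar>g y\<bar> \<le> a"
    using assms unfolding bounded_iff by auto
  then have bdd: "bdd_above (range (\<lambda>x. \<bar>g x\<bar>))"
    by (intro bdd_aboveI2)
  show ?thesis
    unfolding supnorm_def by (rule cSUP_upper[OF _ bdd]) simp
qed

lemma supnorm_nonneg: "bounded (range g) \<Longrightarrow> 0 \<le> supnorm g"
  by (rule order_trans[OF abs_ge_zero abs_le_supnorm])

lemma
  assumes K: "K \<in> borel \<rightarrow>\<^sub>M prob_algebra borel"
  shows prob_space_kernel: "prob_space (K x)"
    and sets_kernel: "sets (K x) = sets borel"
  using measurable_space[OF K, of x] by (auto simp: space_prob_algebra)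

lemma
  assumes KS: "KS \<in> borel \<rightarrow>\<^sub>M prob_algebra borel" and KC: "KC \<in> borel \<rightarrow>\<^sub>M prob_algebra borel"
  shows atrisk_nonneg: "0 \<le> atrisk KS KC x t"
    and atrisk_le_1: "atrisk KS KC x t \<le> 1"
    and atrisk_antimono: "s \<le> t \<Longrightarrow> atrisk KS KC x t \<le> atrisk KS KC x s"
    and borel_measurable_atrisk: "(\<lambda>x. atrisk KS KC x t) \<in> borel_measurable borel"
proof -
  interpret KS: prob_space "KS x" by (rule prob_space_kernel[OF KS])
  interpret KC: prob_space "KC x" by (rule prob_space_kernel[OF KC])
  show "0 \<le> atrisk KS KC x t"
    by (simp add: atrisk_def)
  show "atrisk KS KC x t \<le> 1"
    by (simp add: atrisk_def mult_le_one)
  show "atrisk KS KC x t \<le> atrisk KS KC x s" if "s \<le> t"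
    unfolding atrisk_def using that sets_kernel[OF KS] sets_kernel[OF KC]
    by (intro mult_mono KS.finite_measure_mono KC.finite_measure_mono) auto
  show "(\<lambda>x. atrisk KS KC x t) \<in> borel_measurable borel"
    unfolding atrisk_def
    using measurable_compose[OF KS measurable_measure_prob_algebra]
      measurable_compose[OF KC measurable_measure_prob_algebra]
    by (intro borel_measurable_times) auto
qed

text \<open>Q abstracts the at-risk function q and lam the baseline hazard lambda_0.\<close>
locale cox_model = prob_space PX for PX :: "'a measure" +
  fixes Q :: "'a \<Rightarrow> real \<Rightarrow> real" and lam :: "real \<Rightarrow> real" and f0 f f1 :: "'a \<Rightarrow> real"
  assumes borel_measurable_Q: "\<And>t. (\<lambda>x. Q x t) \<in> borel_measurable PX"
    and Q_nonneg: "\<And>x t. 0 \<le> Q x t"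
    and Q_le_1: "\<And>x t. Q x t \<le> 1"
    and Q_antimono: "\<And>x s t. s \<le> t \<Longrightarrow> Q x t \<le> Q x s"
    and INF_Q_pos: "(INF x. Q x 1) > 0"
    and lam_nonneg: "\<And>t. t \<in> {0..1} \<Longrightarrow> 0 \<le> lam t"
    and lam_integrable: "set_integrable lborel {0..1} lam"
    and borel_measurable_f0: "f0 \<in> borel_measurable PX" and bounded_f0: "bounded (range f0)"
    and borel_measurable_f: "f \<in> borel_measurable PX" and bounded_f: "bounded (range f)"
    and borel_measurable_f1: "f1 \<in> borel_measurable PX" and bounded_f1: "bounded (range f1)"
begin

declare borel_measurable_Q[measurable] borel_measurable_f0[measurable]
  borel_measurable_f[measurable] borel_measurable_f1[measurable]

lemma INF_Q_le: "t \<le> 1 \<Longrightarrow> (INF x. Q x 1) \<le> Q x t"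
proof -
  assume "t \<le> 1"
  have "bdd_below (range (\<lambda>x. Q x 1))"
    using Q_nonneg by (intro bdd_belowI2)
  then have "(INF x. Q x 1) \<le> Q x 1"
    by (rule cINF_lower) simp
  also have "\<dots> \<le> Q x t"
    using Q_antimono \<open>t \<le> 1\<close> .
  finally show ?thesis .
qed

lemma abs_Q_mult_le: "\<bar>w\<bar> \<le> B \<Longrightarrow> \<bar>Q x t * w\<bar> \<le> B"
proof -
  assume "\<bar>w\<bar> \<le> B"
  then have "Q x t * \<bar>w\<bar> \<le> 1 * B"
    using Q_nonneg Q_le_1 by (intro mult_mono) auto
  then show ?thesis
    using Q_nonneg[of x t] by (simp add: abs_mult)
qed

lemma integrable_Q_mult:
  assumes "w \<in> borel_measurable PX" "\<And>x. \<bar>w x\<bar> \<le> B"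
  shows "integrable PX (\<lambda>x. Q x t * w x)"
  using assms by (intro integrable_const_bound[where B=B]) (auto intro: abs_Q_mult_le)

text \<open>Joint measurability of Q in (x, t) is not available; measurability in t comes instead from
  monotonicity of t \<mapsto> Q x t, after splitting w into its positive and negative parts.\<close>
lemma borel_measurable_integral_Q:
  assumes w: "w \<in> borel_measurable PX" and bound: "\<And>x. \<bar>w x\<bar> \<le> B"
  shows "(\<lambda>t. \<integral>x. Q x t * w x \<partial>PX) \<in> borel_measurable borel"
proof -
  have antimono: "(\<lambda>t. - (\<integral>x. Q x t * v x \<partial>PX)) \<in> borel_measurable borel"
    if v: "v \<in> borel_measurable PX" "\<And>x. \<bar>v x\<bar> \<le> B" "\<And>x. 0 \<le> v x" for v
  proof (rule borel_measurable_mono, rule monoI)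
    fix s t :: real assume "s \<le> t"
    then have "(\<integral>x. Q x t * v x \<partial>PX) \<le> (\<integral>x. Q x s * v x \<partial>PX)"
      using v by (intro integral_mono integrable_Q_mult[where B=B] mult_right_mono Q_antimono) auto
    then show "- (\<integral>x. Q x s * v x \<partial>PX) \<le> - (\<integral>x. Q x t * v x \<partial>PX)"
      by simp
  qed
  have parts: "\<bar>max (w x) 0\<bar> \<le> B" "\<bar>max (- w x) 0\<bar> \<le> B" for x
    using bound[of x] by auto
  have split: "(\<integral>x. Q x t * w x \<partial>PX)
      = - (\<integral>x. Q x t * max (- w x) 0 \<partial>PX) - - (\<integral>x. Q x t * max (w x) 0 \<partial>PX)" for t
  proof -
    have "(\<lambda>x. Q x t * w x) = (\<lambda>x. Q x t * max (w x) 0 - Q x t * max (- w x) 0)"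
      by (auto simp: fun_eq_iff max_def algebra_simps)
    then show ?thesis
      using integrable_Q_mult[OF _ parts(1)] integrable_Q_mult[OF _ parts(2)] w by simp
  qed
  show ?thesis
    unfolding split using w parts by (intro borel_measurable_diff antimono) auto
qed

lemma abs_line_le: "\<bar>f x + e * f1 x\<bar> \<le> supnorm f + \<bar>e\<bar> * supnorm f1"
proof -
  have "\<bar>e * f1 x\<bar> \<le> \<bar>e\<bar> * supnorm f1"
    by (simp add: abs_mult mult_left_mono abs_le_supnorm bounded_f1)
  then show ?thesis
    using abs_le_supnorm[OF bounded_f, of x] by linarith
qed

lemma abs_exp_line_mult_pow_le:
  "\<bar>exp (f x + e * f1 x) * f1 x ^ k\<bar> \<le> exp (supnorm f + \<bar>e\<bar> * supnorm f1) * supnorm f1 ^ k"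
proof -
  have "exp (f x + e * f1 x) \<le> exp (supnorm f + \<bar>e\<bar> * supnorm f1)"
    using abs_line_le[of x e] by simp
  moreover have "\<bar>f1 x ^ k\<bar> \<le> supnorm f1 ^ k"
    by (simp add: power_abs power_mono abs_le_supnorm bounded_f1)
  ultimately show ?thesis
    by (simp add: abs_mult mult_mono)
qed

definition S_moment :: "nat \<Rightarrow> real \<Rightarrow> real \<Rightarrow> real" where
  "S_moment k e t = (\<integral>x. Q x t * (exp (f x + e * f1 x) * f1 x ^ k) \<partial>PX)"

lemma Sfun_line: "Sfun PX Q (\<lambda>x. f x + e * f1 x) t = S_moment 0 e t"
  by (simp add: Sfun_def S_moment_def)

lemma integrable_S_moment: "integrable PX (\<lambda>x. Q x t * (exp (f x + e * f1 x) * f1 x ^ k))"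
  by (rule integrable_Q_mult[OF _ abs_exp_line_mult_pow_le]) simp

lemma borel_measurable_S_moment[measurable]: "S_moment k e \<in> borel_measurable borel"
  unfolding S_moment_def[abs_def] by (rule borel_measurable_integral_Q[OF _ abs_exp_line_mult_pow_le]) simp

lemma has_real_derivative_S_moment[derivative_intros]:
  "((\<lambda>e. S_moment k e t) has_real_derivative S_moment (Suc k) e0 t) (at e0 within s)"
proof -
  define B where "B = exp (supnorm f + (\<bar>e0\<bar> + 1) * supnorm f1) * supnorm f1 ^ Suc (Suc k)"
  have "((\<lambda>e. S_moment k e t) has_real_derivative S_moment (Suc k) e0 t) (at e0)"
    unfolding S_moment_def
  proof (rule has_real_derivative_integral[where r=1 and L="\<lambda>x. B"
        and h''="\<lambda>e x. Q x t * (exp (f x + e * f1 x) * f1 x ^ Suc (Suc k))"])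
    fix x e assume e: "\<bar>e - e0\<bar> \<le> 1"
    show "((\<lambda>e. Q x t * (exp (f x + e * f1 x) * f1 x ^ k)) has_real_derivative
        Q x t * (exp (f x + e * f1 x) * f1 x ^ Suc k)) (at e)"
      by (auto intro!: derivative_eq_intros)
    show "((\<lambda>e. Q x t * (exp (f x + e * f1 x) * f1 x ^ Suc k)) has_real_derivative
        Q x t * (exp (f x + e * f1 x) * f1 x ^ Suc (Suc k))) (at e)"
      by (auto intro!: derivative_eq_intros)
    have "\<bar>e\<bar> * supnorm f1 \<le> (\<bar>e0\<bar> + 1) * supnorm f1"
      using e supnorm_nonneg[OF bounded_f1] by (intro mult_right_mono) auto
    then have "exp (supnorm f + \<bar>e\<bar> * supnorm f1) * supnorm f1 ^ Suc (Suc k) \<le> B"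
      unfolding B_def using supnorm_nonneg[OF bounded_f1] by (intro mult_right_mono) auto
    with abs_exp_line_mult_pow_le have "\<bar>exp (f x + e * f1 x) * f1 x ^ Suc (Suc k)\<bar> \<le> B"
      by (rule order_trans)
    then show "\<bar>Q x t * (exp (f x + e * f1 x) * f1 x ^ Suc (Suc k))\<bar> \<le> B"
      by (rule abs_Q_mult_le)
  qed (use integrable_S_moment[of t _ k] integrable_S_moment[of t _ "Suc k"] in auto)
  then show ?thesis
    by (rule has_field_derivative_at_within)
qed

lemma
  assumes "\<bar>e\<bar> \<le> R"
  shows S_moment_0_le: "S_moment 0 e t \<le> exp (supnorm f + R * supnorm f1)"
    and S_moment_0_ge: "t \<le> 1 \<Longrightarrow> (INF x. Q x 1) * exp (- (supnorm f + R * supnorm f1)) \<le> S_moment 0 e t"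
proof -
  have "\<bar>e\<bar> * supnorm f1 \<le> R * supnorm f1"
    by (intro mult_right_mono assms supnorm_nonneg bounded_f1)
  then have line: "\<bar>f x + e * f1 x\<bar> \<le> supnorm f + R * supnorm f1" for x
    using abs_line_le[of x e] by linarith
  have "\<bar>S_moment 0 e t\<bar> \<le> exp (supnorm f + R * supnorm f1)"
    unfolding S_moment_def using line
    by (intro abs_integral_le_const integrable_S_moment abs_Q_mult_le) (simp add: abs_le_iff)
  then show "S_moment 0 e t \<le> exp (supnorm f + R * supnorm f1)"
    by simp
  assume "t \<le> 1"
  have "(INF x. Q x 1) * exp (- (supnorm f + R * supnorm f1)) \<le> Q x t * exp (f x + e * f1 x)" for x
    using INF_Q_le[OF \<open>t \<le> 1\<close>] INF_Q_pos Q_nonneg line[of x] by (intro mult_mono) auto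
  then show "(INF x. Q x 1) * exp (- (supnorm f + R * supnorm f1)) \<le> S_moment 0 e t"
    unfolding S_moment_def by (intro const_le_integral integrable_S_moment) simp
qed

lemma S_moment_0_pos: "t \<le> 1 \<Longrightarrow> 0 < S_moment 0 e t"
  using S_moment_0_ge[of e "\<bar>e\<bar>" t] INF_Q_pos by (auto intro: less_le_trans[rotated])

lemma abs_S_moment_le: "\<bar>S_moment k e t\<bar> \<le> supnorm f1 ^ k * S_moment 0 e t"
proof -
  have "\<bar>S_moment k e t\<bar> \<le> (\<integral>x. \<bar>Q x t * (exp (f x + e * f1 x) * f1 x ^ k)\<bar> \<partial>PX)"
    unfolding S_moment_def by (rule integral_abs_bound)
  also have "\<dots> \<le> (\<integral>x. supnorm f1 ^ k * (Q x t * (exp (f x + e * f1 x) * f1 x ^ 0)) \<partial>PX)"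
  proof (rule integral_mono)
    fix x
    have "Q x t * exp (f x + e * f1 x) * \<bar>f1 x ^ k\<bar> \<le> Q x t * exp (f x + e * f1 x) * supnorm f1 ^ k"
      using Q_nonneg[of x t] by (intro mult_left_mono)
        (simp_all add: power_abs power_mono abs_le_supnorm bounded_f1)
    then show "\<bar>Q x t * (exp (f x + e * f1 x) * f1 x ^ k)\<bar>
        \<le> supnorm f1 ^ k * (Q x t * (exp (f x + e * f1 x) * f1 x ^ 0))"
      using Q_nonneg[of x t] by (simp add: abs_mult mult_ac)
  qed (use integrable_S_moment[of t e k] integrable_S_moment[of t e 0] in simp_all)
  also have "\<dots> = supnorm f1 ^ k * S_moment 0 e t"
    unfolding S_moment_def by simp
  finally show ?thesis .
qed

text \<open>S_ratio k e t is the mean of f1^k under the probability measure proportional to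
  Q(x,t) exp(f + e f1) dP_X.\<close>
definition S_ratio :: "nat \<Rightarrow> real \<Rightarrow> real \<Rightarrow> real" where
  "S_ratio k e t = S_moment k e t / S_moment 0 e t"

lemma abs_S_ratio_le: "\<bar>S_ratio k e t\<bar> \<le> supnorm f1 ^ k"
proof (cases "S_moment 0 e t = 0")
  case False
  have "0 \<le> S_moment 0 e t"
    using abs_S_moment_le[of 0 e t] by simp
  with False abs_S_moment_le[of k e t] show ?thesis
    by (simp add: S_ratio_def abs_divide pos_divide_le_eq)
qed (simp add: S_ratio_def supnorm_nonneg bounded_f1)

lemma borel_measurable_S_ratio[measurable]: "S_ratio k e \<in> borel_measurable borel"
  unfolding S_ratio_def[abs_def] by measurable

lemma has_real_derivative_S_ratio[derivative_intros]:
  "t \<le> 1 \<Longrightarrow> ((\<lambda>e. S_ratio k e t) has_real_derivative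
    S_ratio (Suc k) e t - S_ratio k e t * S_ratio 1 e t) (at e within s)"
  using S_moment_0_pos[of t e] unfolding S_ratio_def
  by (auto intro!: derivative_eq_intros simp: field_simps power2_eq_square)

lemma has_real_derivative_ln_S_moment_0[derivative_intros]:
  "t \<le> 1 \<Longrightarrow> ((\<lambda>e. ln (S_moment 0 e t)) has_real_derivative S_ratio 1 e t) (at e within s)"
  using S_moment_0_pos[of t e] unfolding S_ratio_def
  by (auto intro!: derivative_eq_intros)

lemma abs_ln_S_moment_0_le:
  assumes "t \<le> 1" "\<bar>e\<bar> \<le> R"
  shows "\<bar>ln (S_moment 0 e t)\<bar> \<le> \<bar>ln (INF x. Q x 1)\<bar> + (supnorm f + R * supnorm f1)"
proof -
  define E where "E = supnorm f + R * supnorm f1"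
  have "0 \<le> E"
    unfolding E_def using assms(2) supnorm_nonneg[OF bounded_f] supnorm_nonneg[OF bounded_f1] by simp
  have pos: "0 < S_moment 0 e t"
    using S_moment_0_pos[OF assms(1)] .
  have "ln (INF x. Q x 1) - E = ln ((INF x. Q x 1) * exp (- E))"
    using INF_Q_pos by (simp add: ln_mult)
  also have "\<dots> \<le> ln (S_moment 0 e t)"
    using S_moment_0_ge[OF assms(2,1)] INF_Q_pos pos unfolding E_def by (subst ln_le_cancel_iff) auto
  finally have lower: "ln (INF x. Q x 1) - E \<le> ln (S_moment 0 e t)" .
  have "ln (S_moment 0 e t) \<le> ln (exp E)"
    using S_moment_0_le[OF assms(2)] pos unfolding E_def by (subst ln_le_cancel_iff) auto
  with lower \<open>0 \<le> E\<close> show ?thesis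
    unfolding E_def[symmetric] by auto
qed

lemma abs_S_ratio_variance_le: "\<bar>S_ratio 2 e t - (S_ratio 1 e t)\<^sup>2\<bar> \<le> 2 * supnorm f1 ^ 2"
proof -
  have "(S_ratio 1 e t)\<^sup>2 \<le> supnorm f1 ^ 2"
    using abs_S_ratio_le[of 1 e t] by (simp add: abs_le_square_iff[symmetric])
  moreover have "0 \<le> (S_ratio 1 e t)\<^sup>2"
    by simp
  ultimately show ?thesis
    using abs_S_ratio_le[of 2 e t] unfolding abs_le_iff by linarith
qed

lemma abs_S_ratio_third_central_le:
  "\<bar>S_ratio 3 e t - 3 * S_ratio 1 e t * S_ratio 2 e t + 2 * (S_ratio 1 e t)^3\<bar> \<le> 6 * supnorm f1 ^ 3"
proof -
  define B where "B = supnorm f1"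
  have r1: "\<bar>S_ratio 1 e t\<bar> \<le> B" and r2: "\<bar>S_ratio 2 e t\<bar> \<le> B^2" and r3: "\<bar>S_ratio 3 e t\<bar> \<le> B^3"
    using abs_S_ratio_le unfolding B_def by (metis power_one_right)+
  have "\<bar>S_ratio 1 e t * S_ratio 2 e t\<bar> \<le> B * B^2"
    unfolding abs_mult using r1 r2 by (intro mult_mono) auto
  moreover have "\<bar>(S_ratio 1 e t)^3\<bar> \<le> B^3"
    unfolding power_abs using r1 by (intro power_mono) auto
  ultimately show ?thesis
    using r3 unfolding B_def[symmetric] by (simp add: abs_le_iff power3_eq_cube power2_eq_square)
qed

lemma Sfun_f0_bounds: "0 \<le> Sfun PX Q f0 t" "Sfun PX Q f0 t \<le> exp (supnorm f0)"
proof -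
  have exp_f0: "\<bar>exp (f0 x)\<bar> \<le> exp (supnorm f0)" for x
    using abs_le_supnorm[OF bounded_f0, of x] by simp
  show "0 \<le> Sfun PX Q f0 t"
    unfolding Sfun_def using Q_nonneg by simp
  have "\<bar>Sfun PX Q f0 t\<bar> \<le> exp (supnorm f0)"
    unfolding Sfun_def using exp_f0
    by (intro abs_integral_le_const integrable_Q_mult[where B="exp (supnorm f0)"] abs_Q_mult_le) auto
  then show "Sfun PX Q f0 t \<le> exp (supnorm f0)"
    by simp
qed

lemma borel_measurable_Sfun_f0[measurable]: "Sfun PX Q f0 \<in> borel_measurable borel"
  unfolding Sfun_def[abs_def]
  by (rule borel_measurable_integral_Q[where B="exp (supnorm f0)"])
    (use abs_le_supnorm[OF bounded_f0] in \<open>auto simp: abs_le_iff\<close>)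

lemma abs_mult_Sfun_f0_le: "\<bar>c\<bar> \<le> C \<Longrightarrow> \<bar>c * Sfun PX Q f0 t\<bar> \<le> C * exp (supnorm f0)"
  using Sfun_f0_bounds[of t] by (simp add: abs_mult mult_mono)

lemma has_real_derivative_log_term:
  "((\<lambda>e. LINT t:{0..1}|lborel. ln (S_moment 0 e t) * Sfun PX Q f0 t * lam t) has_real_derivative
     (LINT t:{0..1}|lborel. S_ratio 1 e0 t * Sfun PX Q f0 t * lam t)) (at e0)"
proof (rule has_real_derivative_set_integral[OF zero_less_one lam_integrable,
      where h'="\<lambda>e t. S_ratio 1 e t * Sfun PX Q f0 t"
        and h''="\<lambda>e t. (S_ratio 2 e t - (S_ratio 1 e t)\<^sup>2) * Sfun PX Q f0 t"
        and C="(\<bar>ln (INF x. Q x 1)\<bar> + (supnorm f + (\<bar>e0\<bar> + 1) * supnorm f1)) * exp (supnorm f0)"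
        and C'="supnorm f1 * exp (supnorm f0)" and C''="2 * supnorm f1 ^ 2 * exp (supnorm f0)"])
  fix t e :: real assume t: "t \<in> {0..1}" and e: "\<bar>e - e0\<bar> \<le> 1"
  show "((\<lambda>e. ln (S_moment 0 e t) * Sfun PX Q f0 t) has_real_derivative
      S_ratio 1 e t * Sfun PX Q f0 t) (at e)"
    using t by (auto intro!: derivative_eq_intros)
  show "((\<lambda>e. S_ratio 1 e t * Sfun PX Q f0 t) has_real_derivative
      (S_ratio 2 e t - (S_ratio 1 e t)\<^sup>2) * Sfun PX Q f0 t) (at e)"
    using t by (auto intro!: derivative_eq_intros simp: power2_eq_square numeral_2_eq_2)
  show "\<bar>ln (S_moment 0 e t) * Sfun PX Q f0 t\<bar>
      \<le> (\<bar>ln (INF x. Q x 1)\<bar> + (supnorm f + (\<bar>e0\<bar> + 1) * supnorm f1)) * exp (supnorm f0)"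
    using t e by (intro abs_mult_Sfun_f0_le abs_ln_S_moment_0_le) auto
  show "\<bar>(S_ratio 2 e t - (S_ratio 1 e t)\<^sup>2) * Sfun PX Q f0 t\<bar> \<le> 2 * supnorm f1 ^ 2 * exp (supnorm f0)"
    by (intro abs_mult_Sfun_f0_le abs_S_ratio_variance_le)
next
  fix t
  show "\<bar>S_ratio 1 e0 t * Sfun PX Q f0 t\<bar> \<le> supnorm f1 * exp (supnorm f0)"
    using abs_S_ratio_le[of 1 e0 t] by (intro abs_mult_Sfun_f0_le) simp
qed measurable

lemma has_real_derivative_mean_term:
  "((\<lambda>e. LINT t:{0..1}|lborel. S_ratio 1 e t * Sfun PX Q f0 t * lam t) has_real_derivative
     (LINT t:{0..1}|lborel. (S_ratio 2 e0 t - (S_ratio 1 e0 t)\<^sup>2) * Sfun PX Q f0 t * lam t)) (at e0)"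
proof (rule has_real_derivative_set_integral[OF zero_less_one lam_integrable,
      where h'="\<lambda>e t. (S_ratio 2 e t - (S_ratio 1 e t)\<^sup>2) * Sfun PX Q f0 t"
        and h''="\<lambda>e t. (S_ratio 3 e t - 3 * S_ratio 1 e t * S_ratio 2 e t + 2 * (S_ratio 1 e t)^3)
          * Sfun PX Q f0 t"
        and C="supnorm f1 * exp (supnorm f0)" and C'="2 * supnorm f1 ^ 2 * exp (supnorm f0)"
        and C''="6 * supnorm f1 ^ 3 * exp (supnorm f0)"])
  fix t e :: real assume t: "t \<in> {0..1}" and e: "\<bar>e - e0\<bar> \<le> 1"
  show "((\<lambda>e. S_ratio 1 e t * Sfun PX Q f0 t) has_real_derivative
      (S_ratio 2 e t - (S_ratio 1 e t)\<^sup>2) * Sfun PX Q f0 t) (at e)"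
    using t by (auto intro!: derivative_eq_intros simp: power2_eq_square numeral_2_eq_2)
  show "((\<lambda>e. (S_ratio 2 e t - (S_ratio 1 e t)\<^sup>2) * Sfun PX Q f0 t) has_real_derivative
      (S_ratio 3 e t - 3 * S_ratio 1 e t * S_ratio 2 e t + 2 * (S_ratio 1 e t)^3) * Sfun PX Q f0 t) (at e)"
    using t by (auto intro!: derivative_eq_intros
        simp: power2_eq_square power3_eq_cube numeral_3_eq_3 numeral_2_eq_2 algebra_simps)
  show "\<bar>S_ratio 1 e t * Sfun PX Q f0 t\<bar> \<le> supnorm f1 * exp (supnorm f0)"
    using abs_S_ratio_le[of 1 e t] by (intro abs_mult_Sfun_f0_le) simp
  show "\<bar>(S_ratio 3 e t - 3 * S_ratio 1 e t * S_ratio 2 e t + 2 * (S_ratio 1 e t)^3) * Sfun PX Q f0 t\<bar>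
      \<le> 6 * supnorm f1 ^ 3 * exp (supnorm f0)"
    by (intro abs_mult_Sfun_f0_le abs_S_ratio_third_central_le)
next
  fix t
  show "\<bar>(S_ratio 2 e0 t - (S_ratio 1 e0 t)\<^sup>2) * Sfun PX Q f0 t\<bar> \<le> 2 * supnorm f1 ^ 2 * exp (supnorm f0)"
    by (intro abs_mult_Sfun_f0_le abs_S_ratio_variance_le)
qed measurable

lemma
  assumes "g \<in> borel_measurable PX" "bounded (range g)"
  shows integrable_Q_exp_f0_mult: "integrable PX (\<lambda>x. Q x t * exp (f0 x) * g x)"
    and set_integrable_Q_exp_f0_mult:
      "set_integrable lborel {0..1} (\<lambda>t. (\<integral>x. Q x t * exp (f0 x) * g x \<partial>PX) * lam t)"
proof -
  have bound: "\<bar>exp (f0 x) * g x\<bar> \<le> exp (supnorm f0) * supnorm g" for x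
    using abs_le_supnorm[OF bounded_f0, of x] abs_le_supnorm[OF assms(2), of x]
    by (simp add: abs_mult mult_mono)
  have "integrable PX (\<lambda>x. Q x t * (exp (f0 x) * g x))" for t
    using assms(1) by (intro integrable_Q_mult[OF _ bound]) simp
  then show "integrable PX (\<lambda>x. Q x t * exp (f0 x) * g x)"
    by (simp add: mult.assoc)
  have "(\<lambda>t. \<integral>x. Q x t * (exp (f0 x) * g x) \<partial>PX) \<in> borel_measurable borel"
    using assms(1) by (intro borel_measurable_integral_Q[OF _ bound]) simp
  moreover have "\<bar>\<integral>x. Q x t * (exp (f0 x) * g x) \<partial>PX\<bar> \<le> exp (supnorm f0) * supnorm g" for t
    using assms(1) by (intro abs_integral_le_const integrable_Q_mult[OF _ bound] abs_Q_mult_le bound) simp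
  ultimately show "set_integrable lborel {0..1} (\<lambda>t. (\<integral>x. Q x t * exp (f0 x) * g x \<partial>PX) * lam t)"
    by (intro set_integrable_bounded_mult[OF lam_integrable]) (simp_all add: mult.assoc)
qed

lemma ell_star_line:
  "ell_star PX Q lam f0 (\<lambda>x. f x + e * f1 x)
     = (LINT t:{0..1}|lborel. ln (S_moment 0 e t) * Sfun PX Q f0 t * lam t)
     - (LINT t:{0..1}|lborel. (\<integral>x. Q x t * exp (f0 x) * f x \<partial>PX) * lam t)
     - e * (LINT t:{0..1}|lborel. (\<integral>x. Q x t * exp (f0 x) * f1 x \<partial>PX) * lam t)"
proof -
  have "(\<integral>x. Q x t * exp (f0 x) * (f x + e * f1 x) \<partial>PX)
      = (\<integral>x. Q x t * exp (f0 x) * f x \<partial>PX) + e * (\<integral>x. Q x t * exp (f0 x) * f1 x \<partial>PX)" for t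
    using integrable_Q_exp_f0_mult[OF borel_measurable_f bounded_f, of t]
      integrable_Q_exp_f0_mult[OF borel_measurable_f1 bounded_f1, of t]
    by (simp add: distrib_left mult.left_commute)
  then show ?thesis
    using set_integrable_Q_exp_f0_mult[OF borel_measurable_f bounded_f]
      set_integrable_Q_exp_f0_mult[OF borel_measurable_f1 bounded_f1]
    by (simp add: ell_star_def Sfun_line distrib_right mult.assoc)
qed

lemma Sfun_f0_compare:
  shows "exp (- supnorm (\<lambda>x. f x - f0 x)) * S_moment 0 0 t \<le> Sfun PX Q f0 t"
    and "Sfun PX Q f0 t \<le> exp (supnorm (\<lambda>x. f x - f0 x)) * S_moment 0 0 t"
proof -
  define d where "d = supnorm (\<lambda>x. f x - f0 x)"
  have d: "\<bar>f x - f0 x\<bar> \<le> d" for x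
    unfolding d_def by (rule abs_le_supnorm[OF bounded_minus_comp[OF bounded_f bounded_f0]])
  have S0: "S_moment 0 0 t = (\<integral>x. Q x t * exp (f x) \<partial>PX)"
    by (simp add: S_moment_def)
  have int_f: "integrable PX (\<lambda>x. Q x t * exp (f x))"
    using integrable_S_moment[of t 0 0] by simp
  have int_f0: "integrable PX (\<lambda>x. Q x t * exp (f0 x))"
    by (rule integrable_Q_mult[where B="exp (supnorm f0)"])
      (use abs_le_supnorm[OF bounded_f0] in \<open>auto simp: abs_le_iff\<close>)
  have "exp (- d) * S_moment 0 0 t = (\<integral>x. exp (- d) * (Q x t * exp (f x)) \<partial>PX)"
    unfolding S0 by simp
  also have "\<dots> \<le> Sfun PX Q f0 t"
    unfolding Sfun_def
  proof (rule integral_mono)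
    fix x
    have "exp (- d) * exp (f x) \<le> exp (f0 x)"
      using d[of x] by (simp flip: exp_add)
    then show "exp (- d) * (Q x t * exp (f x)) \<le> Q x t * exp (f0 x)"
      using Q_nonneg[of x t] by (metis mult.left_commute mult_left_mono)
  qed (use int_f int_f0 in auto)
  finally show "exp (- d) * S_moment 0 0 t \<le> Sfun PX Q f0 t" .
  have "Sfun PX Q f0 t \<le> (\<integral>x. exp d * (Q x t * exp (f x)) \<partial>PX)"
    unfolding Sfun_def
  proof (rule integral_mono)
    fix x
    have "exp (f0 x) \<le> exp d * exp (f x)"
      using d[of x] by (simp flip: exp_add)
    then show "Q x t * exp (f0 x) \<le> exp d * (Q x t * exp (f x))"
      using Q_nonneg[of x t] by (metis mult.left_commute mult_left_mono)
  qed (use int_f int_f0 in auto)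
  also have "\<dots> = exp d * S_moment 0 0 t"
    unfolding S0 by simp
  finally show "Sfun PX Q f0 t \<le> exp d * S_moment 0 0 t" .
qed

lemma S_moment_sq_dev_expand:
  "Q x t * (exp (f x + e * f1 x) * (f1 x - c)\<^sup>2)
    = Q x t * (exp (f x + e * f1 x) * f1 x ^ 2) - 2 * c * (Q x t * (exp (f x + e * f1 x) * f1 x ^ 1))
      + c\<^sup>2 * (Q x t * (exp (f x + e * f1 x) * f1 x ^ 0))"
  by (simp add: power2_eq_square algebra_simps)

lemma
  shows integrable_S_moment_sq_dev: "integrable PX (\<lambda>x. Q x t * (exp (f x + e * f1 x) * (f1 x - c)\<^sup>2))"
    and integral_S_moment_sq_dev: "(\<integral>x. Q x t * (exp (f x + e * f1 x) * (f1 x - c)\<^sup>2) \<partial>PX)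
      = S_moment 2 e t - 2 * c * S_moment 1 e t + c\<^sup>2 * S_moment 0 e t"
  unfolding S_moment_sq_dev_expand S_moment_def
  using integrable_S_moment[of t e 0] integrable_S_moment[of t e 1] integrable_S_moment[of t e 2]
  by simp_all

lemma S_ratio_variance_eq:
  assumes "t \<le> 1"
  shows "(S_ratio 2 e t - (S_ratio 1 e t)\<^sup>2) * S_moment 0 e t
    = (\<integral>x. Q x t * (exp (f x + e * f1 x) * (f1 x - S_ratio 1 e t)\<^sup>2) \<partial>PX)"
proof -
  have moment: "S_moment k e t = S_ratio k e t * S_moment 0 e t" for k
    using S_moment_0_pos[OF assms, of e] by (simp add: S_ratio_def)
  show ?thesis
    unfolding integral_S_moment_sq_dev moment[of 1] moment[of 2] by (simp add: power2_eq_square algebra_simps)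
qed

lemma S_ratio_variance_nonneg:
  assumes "t \<le> 1"
  shows "0 \<le> S_ratio 2 e t - (S_ratio 1 e t)\<^sup>2"
proof -
  have "0 \<le> (S_ratio 2 e t - (S_ratio 1 e t)\<^sup>2) * S_moment 0 e t"
    unfolding S_ratio_variance_eq[OF assms] using Q_nonneg by (intro Bochner_Integration.integral_nonneg) simp
  then show ?thesis
    using S_moment_0_pos[OF assms, of e] by (simp add: zero_le_mult_iff)
qed

lemma integrable_f1_power: "integrable PX (\<lambda>x. f1 x ^ k)"
  by (rule integrable_const_bound[where B="supnorm f1 ^ k"])
    (auto simp: power_abs intro!: power_mono abs_le_supnorm bounded_f1)

lemma variance_le_S_ratio_variance:
  assumes "t \<le> 1"
  shows "(INF x. Q x 1) * exp (- supnorm f) * variance f1 \<le> (S_ratio 2 0 t - (S_ratio 1 0 t)\<^sup>2) * S_moment 0 0 t"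
proof -
  define c where "c = S_ratio 1 0 t"
  have int_dev: "integrable PX (\<lambda>x. (f1 x - c)\<^sup>2)"
    using integrable_f1_power[of 1] integrable_f1_power[of 2] by (simp add: power2_diff)
  have "(INF x. Q x 1) * exp (- supnorm f) * variance f1
      \<le> (INF x. Q x 1) * exp (- supnorm f) * expectation (\<lambda>x. (f1 x - c)\<^sup>2)"
    using variance_le_expectation_sq_diff integrable_f1_power[of 1] integrable_f1_power[of 2] INF_Q_pos
    by (intro mult_left_mono) auto
  also have "\<dots> = (\<integral>x. (INF x. Q x 1) * exp (- supnorm f) * (f1 x - c)\<^sup>2 \<partial>PX)"
    by simp
  also have "\<dots> \<le> (\<integral>x. Q x t * (exp (f x + 0 * f1 x) * (f1 x - c)\<^sup>2) \<partial>PX)"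
  proof (rule integral_mono)
    fix x
    have "exp (- supnorm f) \<le> exp (f x)"
      using abs_le_supnorm[OF bounded_f, of x] by simp
    then have "(INF x. Q x 1) * exp (- supnorm f) \<le> Q x t * exp (f x)"
      using INF_Q_le[OF assms] INF_Q_pos Q_nonneg by (intro mult_mono) auto
    then show "(INF x. Q x 1) * exp (- supnorm f) * (f1 x - c)\<^sup>2 \<le> Q x t * (exp (f x + 0 * f1 x) * (f1 x - c)\<^sup>2)"
      by (simp add: mult.assoc[symmetric] mult_right_mono)
  qed (use int_dev integrable_S_moment_sq_dev[of t 0 c] in auto)
  also have "\<dots> = (S_ratio 2 0 t - (S_ratio 1 0 t)\<^sup>2) * S_moment 0 0 t"
    unfolding c_def by (rule S_ratio_variance_eq[OF assms, symmetric])
  finally show ?thesis .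
qed

lemma S_ratio_variance_le:
  assumes "t \<le> 1"
  shows "(S_ratio 2 0 t - (S_ratio 1 0 t)\<^sup>2) * S_moment 0 0 t \<le> exp (supnorm f) * expectation (\<lambda>x. (f1 x)\<^sup>2)"
proof -
  have pos: "0 < S_moment 0 0 t"
    using S_moment_0_pos[OF assms] .
  have "(S_ratio 2 0 t - (S_ratio 1 0 t)\<^sup>2) * S_moment 0 0 t \<le> S_ratio 2 0 t * S_moment 0 0 t"
    using pos by (intro mult_right_mono) auto
  also have "\<dots> = (\<integral>x. Q x t * (exp (f x) * (f1 x)\<^sup>2) \<partial>PX)"
    using pos by (simp add: S_ratio_def S_moment_def)
  also have "\<dots> \<le> (\<integral>x. exp (supnorm f) * (f1 x)\<^sup>2 \<partial>PX)"
  proof (rule integral_mono)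
    fix x
    have "Q x t * exp (f x) \<le> 1 * exp (supnorm f)"
      using Q_le_1[of x t] Q_nonneg[of x t] abs_le_supnorm[OF bounded_f, of x] by (intro mult_mono) auto
    then show "Q x t * (exp (f x) * (f1 x)\<^sup>2) \<le> exp (supnorm f) * (f1 x)\<^sup>2"
      by (simp add: mult.assoc[symmetric] mult_right_mono)
  next
    show "integrable PX (\<lambda>x. Q x t * (exp (f x) * (f1 x)\<^sup>2))"
      using integrable_S_moment[of t 0 2] by simp
    show "integrable PX (\<lambda>x. exp (supnorm f) * (f1 x)\<^sup>2)"
      using integrable_f1_power[of 2] by simp
  qed
  finally show ?thesis
    by simp
qed

lemma S_ratio_variance_Sfun_f0_bounds:
  assumes "t \<le> 1"
  shows "exp (- supnorm (\<lambda>x. f x - f0 x)) * exp (- supnorm f) * (INF x. Q x 1) * variance f1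
      \<le> (S_ratio 2 0 t - (S_ratio 1 0 t)\<^sup>2) * Sfun PX Q f0 t"
    and "(S_ratio 2 0 t - (S_ratio 1 0 t)\<^sup>2) * Sfun PX Q f0 t
      \<le> exp (supnorm (\<lambda>x. f x - f0 x)) * exp (supnorm f) * expectation (\<lambda>x. (f1 x)\<^sup>2)"
proof -
  define d where "d = supnorm (\<lambda>x. f x - f0 x)"
  define V where "V = S_ratio 2 0 t - (S_ratio 1 0 t)\<^sup>2"
  have "0 \<le> V"
    unfolding V_def by (rule S_ratio_variance_nonneg[OF assms])
  have "exp (- d) * exp (- supnorm f) * (INF x. Q x 1) * variance f1
      = exp (- d) * ((INF x. Q x 1) * exp (- supnorm f) * variance f1)"
    by (simp add: mult_ac)
  also have "\<dots> \<le> exp (- d) * (V * S_moment 0 0 t)"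
    unfolding V_def using variance_le_S_ratio_variance[OF assms] by simp
  also have "\<dots> = V * (exp (- d) * S_moment 0 0 t)"
    by (simp add: mult_ac)
  also have "\<dots> \<le> V * Sfun PX Q f0 t"
    using Sfun_f0_compare(1)[of t] \<open>0 \<le> V\<close> unfolding d_def by (intro mult_left_mono)
  finally show "exp (- d) * exp (- supnorm f) * (INF x. Q x 1) * variance f1 \<le> V * Sfun PX Q f0 t" .
  have "V * Sfun PX Q f0 t \<le> V * (exp d * S_moment 0 0 t)"
    using Sfun_f0_compare(2)[of t] \<open>0 \<le> V\<close> unfolding d_def by (intro mult_left_mono)
  also have "\<dots> = exp d * (V * S_moment 0 0 t)"
    by (simp add: mult_ac)
  also have "\<dots> \<le> exp d * (exp (supnorm f) * expectation (\<lambda>x. (f1 x)\<^sup>2))"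
    unfolding V_def using S_ratio_variance_le[OF assms] by simp
  finally show "V * Sfun PX Q f0 t \<le> exp d * exp (supnorm f) * expectation (\<lambda>x. (f1 x)\<^sup>2)"
    by (simp add: mult_ac)
qed

theorem ell_star_second_derivative_bounds:
  "\<exists>g' D.
      (\<forall>\<^sub>F e in nhds 0. ((\<lambda>e. ell_star PX Q lam f0 (\<lambda>x. f x + e * f1 x)) has_real_derivative g' e) (at e))
    \<and> (g' has_real_derivative D) (at 0)
    \<and> exp (- supnorm (\<lambda>x. f x - f0 x)) * exp (- supnorm f) * (LINT t:{0..1}|lborel. lam t)
        * (INF x. Q x 1) * (L2norm PX (\<lambda>x. f1 x - (\<integral>y. f1 y \<partial>PX)))\<^sup>2 \<le> D
    \<and> D \<le> exp (supnorm (\<lambda>x. f x - f0 x)) * exp (supnorm f) * (LINT t:{0..1}|lborel. lam t)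
        * (L2norm PX f1)\<^sup>2"
proof -
  define g' where "g' e = (LINT t:{0..1}|lborel. S_ratio 1 e t * Sfun PX Q f0 t * lam t)
    - (LINT t:{0..1}|lborel. (\<integral>x. Q x t * exp (f0 x) * f1 x \<partial>PX) * lam t)" for e
  define \<psi> where "\<psi> t = (S_ratio 2 0 t - (S_ratio 1 0 t)\<^sup>2) * Sfun PX Q f0 t" for t
  define D where "D = (LINT t:{0..1}|lborel. \<psi> t * lam t)"
  define lo where "lo = exp (- supnorm (\<lambda>x. f x - f0 x)) * exp (- supnorm f) * (INF x. Q x 1) * variance f1"
  define hi where "hi = exp (supnorm (\<lambda>x. f x - f0 x)) * exp (supnorm f) * expectation (\<lambda>x. (f1 x)\<^sup>2)"
  have "((\<lambda>e. ell_star PX Q lam f0 (\<lambda>x. f x + e * f1 x)) has_real_derivative g' e) (at e)" for e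
    unfolding ell_star_line g'_def by (auto intro!: derivative_eq_intros has_real_derivative_log_term)
  moreover have "(g' has_real_derivative D - 0) (at 0)"
    unfolding g'_def[abs_def] D_def \<psi>_def by (intro DERIV_diff has_real_derivative_mean_term DERIV_const)
  moreover have "lo * (LINT t:{0..1}|lborel. lam t) \<le> D" "D \<le> hi * (LINT t:{0..1}|lborel. lam t)"
    unfolding D_def using S_ratio_variance_Sfun_f0_bounds
    by (intro set_integral_weighted_bounds[OF lam_integrable lam_nonneg];
        force simp: \<psi>_def lo_def hi_def)+
  ultimately show ?thesis
    by (intro exI[of _ g'] exI[of _ D]) (auto simp: L2norm_sq lo_def hi_def mult_ac)
qed

end

theorem mainTheorem12:
  fixes PX :: "'a::metric_space measure"
    and KS KC :: "'a \<Rightarrow> real measure"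
    and lam :: "real \<Rightarrow> real"
    and f0 f f1 :: "'a \<Rightarrow> real"
  assumes lc: "locally_compact_space (euclidean :: 'a topology)"
    and sc: "open_sigma_compact TYPE('a)"
    and PX: "prob_space PX" "sets PX = sets borel"
    and KS: "KS \<in> borel \<rightarrow>\<^sub>M prob_algebra borel" "\<And>x. measure (KS x) {..0} = 0"
    and KC: "KC \<in> borel \<rightarrow>\<^sub>M prob_algebra borel" "\<And>x. measure (KC x) {..0} = 0"
    and q1pos: "(INF x. atrisk KS KC x 1) > 0"
    and lam_meas: "lam \<in> borel_measurable lborel"
    and lam_nonneg: "\<And>t. t \<in> {0..1} \<Longrightarrow> lam t \<ge> 0"
    and lam_int: "set_integrable lborel {0..1} lam"
    and f0: "f0 \<in> bdd_meas" "(\<integral>x. f0 x \<partial>PX) = 0"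
    and hazard: "AE x in PX. \<forall>t\<in>{0..1}.
        measure (KS x) {t<..} = exp (- (LINT s:{0..t}|lborel. lam s) * exp (f0 x))"
    and f: "f \<in> bdd_meas"
    and f1: "f1 \<in> bdd_meas"
  shows "\<exists>g' D.
      (\<forall>\<^sub>F e in nhds 0. ((\<lambda>e. ell_star PX (atrisk KS KC) lam f0 (\<lambda>x. f x + e * f1 x))
          has_real_derivative g' e) (at e))
    \<and> (g' has_real_derivative D) (at 0)
    \<and> exp (- supnorm (\<lambda>x. f x - f0 x)) * exp (- supnorm f) * (LINT t:{0..1}|lborel. lam t)
        * (INF x. atrisk KS KC x 1) * (L2norm PX (\<lambda>x. f1 x - (\<integral>y. f1 y \<partial>PX)))\<^sup>2 \<le> D
    \<and> D \<le> exp (supnorm (\<lambda>x. f x - f0 x)) * exp (supnorm f) * (LINT t:{0..1}|lborel. lam t)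
        * (L2norm PX f1)\<^sup>2"
proof -
  have borel_PX: "borel_measurable PX = borel_measurable borel"
    using PX(2) by (rule measurable_cong_sets) simp
  interpret cox_model PX "atrisk KS KC" lam f0 f f1
    using PX(1) q1pos lam_nonneg lam_int f0(1) f f1
      atrisk_nonneg[OF KS(1) KC(1)] atrisk_le_1[OF KS(1) KC(1)] atrisk_antimono[OF KS(1) KC(1)]
      borel_measurable_atrisk[OF KS(1) KC(1)]
    by (intro cox_model.intro cox_model_axioms.intro) (auto simp: bdd_meas_def borel_PX)
  show ?thesis
    by (rule ell_star_second_derivative_bounds)
qed

end
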